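(* Let $\Omega$ be a doubly periodic domain (flat $2$-torus), $p_1,\dots,p_N\in\Omega$ (not necessarily distinct) and $\lambda>0$. If $u$ is a solution of $$(1-e^u)\Delta u-e^u|\nabla u|^2=-\lambda e^u(e^u-1)^2+4\pi\sum_{s=1}^N\delta_{p_s}\quad\text{in }\Omega,$$ then $u<0$ throughout $\Omega$.
   Context: All functions are doubly periodic on $\Omega$; $\delta_p$ is the Dirac distribution at $p$. A solution means a function $u$, smooth on $\Omega$ minus the points $p_s$, satisfying $(1-e^u)\Delta u-e^u|\nabla u|^2=-\lambda e^u(e^u-1)^2$ pointwise away from the points, and such that near each point $p$ occurring with multiplicity $n$ among $p_1,\dots,p_N$, $u(x)=n\ln|x-p|^2+f(x)$ with $f$ smooth near $p$ (so $u\to-\infty$ at the points). *)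

theory Defs
  imports "HOL-Analysis.Analysis"
begin

definition pd1 :: "(complex \<Rightarrow> real) \<Rightarrow> complex \<Rightarrow> real" where
  "pd1 f z = deriv (\<lambda>t::real. f (z + complex_of_real t)) 0"

definition pd2 :: "(complex \<Rightarrow> real) \<Rightarrow> complex \<Rightarrow> real" where
  "pd2 f z = deriv (\<lambda>t::real. f (z + \<i> * complex_of_real t)) 0"

fun iter_pd :: "bool list \<Rightarrow> (complex \<Rightarrow> real) \<Rightarrow> complex \<Rightarrow> real" where
  "iter_pd [] f = f"
| "iter_pd (b # bs) f = (if b then pd1 else pd2) (iter_pd bs f)"

definition smooth_on :: "complex set \<Rightarrow> (complex \<Rightarrow> real) \<Rightarrow> bool" where
  "smooth_on S f \<longleftrightarrow> (\<forall>ws. iter_pd ws f differentiable_on S \<and> continuous_on S (iter_pd ws f))"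

definition laplacian :: "(complex \<Rightarrow> real) \<Rightarrow> complex \<Rightarrow> real" where
  "laplacian f z = pd1 (pd1 f) z + pd2 (pd2 f) z"

definition grad_sq :: "(complex \<Rightarrow> real) \<Rightarrow> complex \<Rightarrow> real" where
  "grad_sq f z = (pd1 f z)\<^sup>2 + (pd2 f z)\<^sup>2"

definition lattice :: "complex \<Rightarrow> complex \<Rightarrow> complex set" where
  "lattice w1 w2 = {of_int m * w1 + of_int n * w2 | m n. True}"

text \<open>Lift to the plane of the points p_1..p_N of the torus.\<close>
definition sing_set :: "complex \<Rightarrow> complex \<Rightarrow> nat \<Rightarrow> (nat \<Rightarrow> complex) \<Rightarrow> complex set" where
  "sing_set w1 w2 N p = {p s + w | s w. s \<in> {1..N} \<and> w \<in> lattice w1 w2}"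

text \<open>Multiplicity of the torus point represented by q among p_1..p_N.\<close>
definition mult :: "complex \<Rightarrow> complex \<Rightarrow> nat \<Rightarrow> (nat \<Rightarrow> complex) \<Rightarrow> complex \<Rightarrow> nat" where
  "mult w1 w2 N p q = card {s \<in> {1..N}. q - p s \<in> lattice w1 w2}"

definition is_solution ::
  "complex \<Rightarrow> complex \<Rightarrow> real \<Rightarrow> nat \<Rightarrow> (nat \<Rightarrow> complex) \<Rightarrow> (complex \<Rightarrow> real) \<Rightarrow> bool" where
  "is_solution w1 w2 lam N p u \<longleftrightarrow>
     (\<forall>z. u (z + w1) = u z \<and> u (z + w2) = u z) \<and>
     smooth_on (- sing_set w1 w2 N p) u \<and>
     (\<forall>z. z \<notin> sing_set w1 w2 N p \<longrightarrow>
        (1 - exp (u z)) * laplacian u z - exp (u z) * grad_sq u z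
          = - lam * exp (u z) * (exp (u z) - 1)\<^sup>2) \<and>
     (\<forall>q \<in> sing_set w1 w2 N p. \<exists>r>0. \<exists>f. smooth_on (ball q r) f \<and>
        (\<forall>x \<in> ball q r - {q}.
           u x = real (mult w1 w2 N p q) * ln ((cmod (x - q))\<^sup>2) + f x))"

end

theory Submission
  imports Defs
begin

text \<open>
  On the torus u attains a maximum, since u \<rightarrow> -\<infinity> at the vortex points. There the gradient
  vanishes and \<Delta>u \<le> 0, so the equation leaves no room for u > 0. Where u < 0 the equation
  together with exp u (1 - exp u) \<le> -u gives \<Delta>u \<ge> \<lambda> u. For such a nonpositive subsolution
  Hopf's boundary lemma makes the zero set open; it is also relatively closed in the
  connected complement of the vortex points, and u is negative close to them, so the zero
  set is empty.
\<close>

section \<open>Directional derivatives and local extrema\<close>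

definition dir_deriv :: "(complex \<Rightarrow> real) \<Rightarrow> complex \<Rightarrow> complex \<Rightarrow> real" where
  "dir_deriv f d z = deriv (\<lambda>t::real. f (z + complex_of_real t * d)) 0"

lemma pd1_eq_dir_deriv: "pd1 f = dir_deriv f 1"
  by (auto simp: pd1_def dir_deriv_def fun_eq_iff)

lemma pd2_eq_dir_deriv: "pd2 f = dir_deriv f \<i>"
  by (auto simp: pd2_def dir_deriv_def fun_eq_iff mult.commute)

lemma has_real_derivative_along_line:
  assumes "(f has_derivative f') (at (z + complex_of_real t * d))"
  shows "((\<lambda>s. f (z + complex_of_real s * d)) has_real_derivative f' d) (at t)"
proof -
  have "((\<lambda>s. z + complex_of_real s * d) has_derivative (\<lambda>h. complex_of_real h * d)) (at t)"
    by (auto intro!: derivative_eq_intros)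
  from has_derivative_compose[OF this assms]
  have "((\<lambda>s. f (z + complex_of_real s * d)) has_derivative (\<lambda>h. f' (complex_of_real h * d))) (at t)" .
  moreover have "(\<lambda>h. f' (complex_of_real h * d)) = (*) (f' d)"
    using linear_cmul[OF has_derivative_linear[OF assms]]
    by (simp add: fun_eq_iff scaleR_conv_of_real mult.commute)
  ultimately show ?thesis by (simp add: has_field_derivative_def)
qed

lemma has_real_derivative_dir_deriv:
  assumes "f differentiable (at (z + complex_of_real t * d))"
  shows "((\<lambda>s. f (z + complex_of_real s * d)) has_real_derivative
           dir_deriv f d (z + complex_of_real t * d)) (at t)"
proof -
  obtain f' where f': "(f has_derivative f') (at (z + complex_of_real t * d))"
    using assms unfolding differentiable_def by blast
  have "dir_deriv f d (z + complex_of_real t * d) = f' d"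
    unfolding dir_deriv_def
    by (rule DERIV_imp_deriv, rule has_real_derivative_along_line[where t=0]) (use f' in simp)
  with has_real_derivative_along_line[OF f'] show ?thesis by simp
qed

lemma DERIV_nonneg_at_right_local_min:
  fixes f :: "real \<Rightarrow> real"
  assumes f': "(f has_real_derivative D) (at x)" and e: "e > 0"
    and min: "\<And>t. 0 < t \<Longrightarrow> t < e \<Longrightarrow> f x \<le> f (x + t)"
  shows "D \<ge> 0"
proof (rule ccontr)
  assume "\<not> D \<ge> 0"
  then obtain d where d: "d > 0" "\<And>h. 0 < h \<Longrightarrow> h < d \<Longrightarrow> f (x + h) < f x"
    using DERIV_neg_dec_right[OF f'] by force
  have "f (x + min d e / 2) < f x" using d e by (intro d(2)) auto
  moreover have "f x \<le> f (x + min d e / 2)" using d e by (intro min) auto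
  ultimately show False by simp
qed

lemma DERIV2_local_min_nonneg:
  fixes g g' :: "real \<Rightarrow> real"
  assumes e: "e > 0"
    and g': "\<And>t. \<bar>t\<bar> < e \<Longrightarrow> (g has_real_derivative g' t) (at t)"
    and g'': "(g' has_real_derivative D) (at 0)"
    and min: "\<And>t. \<bar>t\<bar> < e \<Longrightarrow> g 0 \<le> g t"
  shows "D \<ge> 0"
proof (rule ccontr)
  assume "\<not> D \<ge> 0"
  then obtain d where d: "d > 0" "\<And>h. h > 0 \<Longrightarrow> h < d \<Longrightarrow> g' h < g' 0"
    using DERIV_neg_dec_right[OF g''] by force
  have "g' 0 = 0"
    by (rule DERIV_local_min[OF g'[of 0] e]) (use e min in auto)
  define t where "t = min d e / 2"
  have t: "t > 0" "t < d" "t < e" using d e by (auto simp: t_def)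
  obtain s where s: "0 < s" "s < t" "g t - g 0 = t * g' s"
    using MVT2[of 0 t g g'] t g' by force
  have "g' s < 0" using d(2)[of s] s t \<open>g' 0 = 0\<close> by simp
  then have "g t < g 0" using s t mult_pos_neg[of t "g' s"] by simp
  with min[of t] t show False by simp
qed

lemma dir_deriv_local_max:
  fixes u :: "complex \<Rightarrow> real"
  assumes r: "r > 0"
    and diff: "\<And>t. \<bar>t\<bar> < r \<Longrightarrow> u differentiable (at (z + complex_of_real t * d))"
    and max: "\<And>t. \<bar>t\<bar> < r \<Longrightarrow> u (z + complex_of_real t * d) \<le> u z"
  shows "dir_deriv u d z = 0"
  using has_real_derivative_dir_deriv[of u z 0 d] diff[of 0] r
  by (intro DERIV_local_max[OF _ r]) (use max in auto)

lemma dir_deriv2_local_max: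
  fixes u :: "complex \<Rightarrow> real"
  assumes r: "r > 0"
    and diff: "\<And>t. \<bar>t\<bar> < r \<Longrightarrow> u differentiable (at (z + complex_of_real t * d))"
    and diff': "dir_deriv u d differentiable (at z)"
    and max: "\<And>t. \<bar>t\<bar> < r \<Longrightarrow> u (z + complex_of_real t * d) \<le> u z"
  shows "dir_deriv (dir_deriv u d) d z \<le> 0"
proof -
  have "- dir_deriv (dir_deriv u d) d z \<ge> 0"
  proof (rule DERIV2_local_min_nonneg[OF r])
    show "((\<lambda>t. - u (z + complex_of_real t * d)) has_real_derivative
            - dir_deriv u d (z + complex_of_real t * d)) (at t)" if "\<bar>t\<bar> < r" for t
      by (intro DERIV_minus has_real_derivative_dir_deriv diff that)
    show "((\<lambda>t. - dir_deriv u d (z + complex_of_real t * d)) has_real_derivative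
            - dir_deriv (dir_deriv u d) d z) (at 0)"
      using has_real_derivative_dir_deriv[of "dir_deriv u d" z 0 d] diff' by (intro DERIV_minus) simp
  qed (use max in auto)
  then show ?thesis by simp
qed

lemma cmod_add_line_power2:
  assumes "cmod d = 1"
  shows "(cmod (a + complex_of_real t * d))\<^sup>2 = (cmod a)\<^sup>2 + 2 * t * Re (a * cnj d) + t\<^sup>2"
proof -
  have "(Re d)\<^sup>2 + (Im d)\<^sup>2 = 1" by (metis assms cmod_power2 power_one)
  then show ?thesis
    unfolding cmod_power2 by (simp add: power2_eq_square algebra_simps) algebra
qed

lemma dir_deriv2_at_local_min_minus_gaussian:
  fixes u :: "complex \<Rightarrow> real"
  assumes e: "e > 0" and d: "cmod d = 1"
    and diff: "\<And>t. \<bar>t\<bar> < e \<Longrightarrow> u differentiable (at (z + complex_of_real t * d))"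
    and diff': "dir_deriv u d differentiable (at z)"
    and min: "\<And>t. \<bar>t\<bar> < e \<Longrightarrow>
       - u z - \<delta> * exp (- \<alpha> * (cmod (z - c))\<^sup>2)
         \<le> - u (z + complex_of_real t * d) - \<delta> * exp (- \<alpha> * (cmod (z + complex_of_real t * d - c))\<^sup>2)"
  shows "\<delta> * exp (- \<alpha> * (cmod (z - c))\<^sup>2) * (4 * \<alpha>\<^sup>2 * (Re ((z - c) * cnj d))\<^sup>2 - 2 * \<alpha>)
           \<le> - dir_deriv (dir_deriv u d) d z"
proof -
  define P where "P = (cmod (z - c))\<^sup>2"
  define Q where "Q = Re ((z - c) * cnj d)"
  have line: "(cmod (z + complex_of_real t * d - c))\<^sup>2 = P + 2 * t * Q + t\<^sup>2" for t
    using cmod_add_line_power2[OF d, of "z - c" t] by (simp add: P_def Q_def algebra_simps)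
  define g where "g t = - u (z + complex_of_real t * d) - \<delta> * exp (- \<alpha> * (P + 2 * t * Q + t\<^sup>2))" for t
  define g' where "g' t = - dir_deriv u d (z + complex_of_real t * d)
                     - \<delta> * (exp (- \<alpha> * (P + 2 * t * Q + t\<^sup>2)) * (- \<alpha> * (2 * Q + 2 * t)))" for t
  have "(g has_real_derivative g' t) (at t)" if "\<bar>t\<bar> < e" for t
    unfolding g_def g'_def
    by (rule DERIV_diff[OF DERIV_minus[OF has_real_derivative_dir_deriv[OF diff[OF that]]]])
       (auto intro!: derivative_eq_intros simp: algebra_simps)
  moreover have "(g' has_real_derivative
      - dir_deriv (dir_deriv u d) d z - \<delta> * (exp (- \<alpha> * P) * (4 * \<alpha>\<^sup>2 * Q\<^sup>2 - 2 * \<alpha>))) (at 0)"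
    unfolding g'_def
    using has_real_derivative_dir_deriv[of "dir_deriv u d" z 0 d] diff'
    by (auto intro!: derivative_eq_intros simp: algebra_simps power2_eq_square)
  moreover have "g 0 \<le> g t" if "\<bar>t\<bar> < e" for t
    using min[OF that] unfolding g_def line by (simp add: P_def)
  ultimately show ?thesis
    using DERIV2_local_min_nonneg[OF e] unfolding P_def Q_def by fastforce
qed

lemma laplacian_at_local_min_minus_gaussian:
  fixes u :: "complex \<Rightarrow> real"
  assumes e: "e > 0"
    and diff: "\<And>y. y \<in> ball z e \<Longrightarrow> u differentiable (at y)"
    and diff1: "pd1 u differentiable (at z)" and diff2: "pd2 u differentiable (at z)"
    and min: "\<And>y. y \<in> ball z e \<Longrightarrow>
       - u z - \<delta> * exp (- \<alpha> * (cmod (z - c))\<^sup>2) \<le> - u y - \<delta> * exp (- \<alpha> * (cmod (y - c))\<^sup>2)"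
  shows "\<delta> * exp (- \<alpha> * (cmod (z - c))\<^sup>2) * (4 * \<alpha>\<^sup>2 * (cmod (z - c))\<^sup>2 - 4 * \<alpha>)
           \<le> - laplacian u z"
proof -
  have on_line: "z + complex_of_real t * d \<in> ball z e" if "cmod d = 1" "\<bar>t\<bar> < e" for t d
    using that by (simp add: dist_norm norm_mult)
  have axis: "\<delta> * exp (- \<alpha> * (cmod (z - c))\<^sup>2) * (4 * \<alpha>\<^sup>2 * (Re ((z - c) * cnj d))\<^sup>2 - 2 * \<alpha>)
           \<le> - dir_deriv (dir_deriv u d) d z"
    if "cmod d = 1" "dir_deriv u d differentiable (at z)" for d
    using that on_line[OF that(1)]
    by (intro dir_deriv2_at_local_min_minus_gaussian[OF e] diff min) auto
  have "(cmod (z - c))\<^sup>2 = (Re (z - c))\<^sup>2 + (Im (z - c))\<^sup>2" by (rule cmod_power2)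
  with axis[of 1] axis[of \<i>] diff1 diff2 show ?thesis
    unfolding laplacian_def pd1_eq_dir_deriv pd2_eq_dir_deriv by (simp add: algebra_simps)
qed

lemma local_max_grad_laplacian:
  fixes u :: "complex \<Rightarrow> real"
  assumes r: "r > 0"
    and diff: "\<And>y. y \<in> ball z r \<Longrightarrow> u differentiable (at y)"
    and diff1: "pd1 u differentiable (at z)" and diff2: "pd2 u differentiable (at z)"
    and max: "\<And>y. y \<in> ball z r \<Longrightarrow> u y \<le> u z"
  shows "grad_sq u z = 0" "laplacian u z \<le> 0"
proof -
  have on_line: "z + complex_of_real t * d \<in> ball z r" if "cmod d = 1" "\<bar>t\<bar> < r" for t d
    using that by (simp add: dist_norm norm_mult)
  have "dir_deriv u d z = 0" if "cmod d = 1" for d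
    using on_line[OF that] by (intro dir_deriv_local_max[OF r] diff max)
  then show "grad_sq u z = 0"
    by (simp add: grad_sq_def pd1_eq_dir_deriv pd2_eq_dir_deriv)
  have "dir_deriv (dir_deriv u d) d z \<le> 0" if "cmod d = 1" "dir_deriv u d differentiable (at z)" for d
    using on_line[OF that(1)] that(2) by (intro dir_deriv2_local_max[OF r] diff max)
  then show "laplacian u z \<le> 0"
    using diff1 diff2 by (simp add: laplacian_def pd1_eq_dir_deriv pd2_eq_dir_deriv add_nonpos_nonpos)
qed

section \<open>Hopf's lemma and the strong maximum principle\<close>

definition hopf_barrier :: "real \<Rightarrow> complex \<Rightarrow> real \<Rightarrow> complex \<Rightarrow> real" where
  "hopf_barrier \<alpha> c \<rho> z = exp (- \<alpha> * (cmod (z - c))\<^sup>2) - exp (- \<alpha> * \<rho>\<^sup>2)"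

locale nonpos_subsolution =
  fixes U :: "complex set" and u :: "complex \<Rightarrow> real" and lam :: real
  assumes open_U: "open U"
    and cont: "continuous_on U u"
    and diff: "z \<in> U \<Longrightarrow> u differentiable (at z)"
    and diff_pd1: "z \<in> U \<Longrightarrow> pd1 u differentiable (at z)"
    and diff_pd2: "z \<in> U \<Longrightarrow> pd2 u differentiable (at z)"
    and nonpos: "z \<in> U \<Longrightarrow> u z \<le> 0"
    and laplacian_ge: "z \<in> U \<Longrightarrow> u z < 0 \<Longrightarrow> lam * u z \<le> laplacian u z"
    and lam_pos: "lam > 0"
begin

text \<open>
  \<Delta> exp (-\<alpha> |z - c|^2) = (4 \<alpha>^2 |z - c|^2 - 4 \<alpha>) exp (-\<alpha> |z - c|^2), which by the choice of \<alpha>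
  exceeds \<lambda> exp (-\<alpha> |z - c|^2) as soon as |z - c| \<ge> \<rho>/2. At a local minimum of -u - \<delta> h,
  h the barrier, where -u < \<delta> h this contradicts \<Delta>u \<ge> \<lambda> u.
\<close>
lemma hopf_barrier_below_at_local_min:
  assumes e: "e > 0" and ball_U: "ball z e \<subseteq> U" and neg: "u z < 0"
    and \<rho>: "\<rho> > 0" and r: "\<rho>/2 \<le> cmod (z - c)"
    and \<delta>: "\<delta> > 0" and \<alpha>: "\<alpha> \<ge> 1" "4 + lam \<le> \<alpha> * \<rho>\<^sup>2"
    and min: "\<And>y. y \<in> ball z e \<Longrightarrow>
      - u z - \<delta> * hopf_barrier \<alpha> c \<rho> z \<le> - u y - \<delta> * hopf_barrier \<alpha> c \<rho> y"
  shows "\<delta> * hopf_barrier \<alpha> c \<rho> z \<le> - u z"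
proof (rule ccontr)
  define E where "E = exp (- \<alpha> * (cmod (z - c))\<^sup>2)"
  define r where "r = cmod (z - c)"
  assume "\<not> \<delta> * hopf_barrier \<alpha> c \<rho> z \<le> - u z"
  moreover have "\<delta> * hopf_barrier \<alpha> c \<rho> z \<le> \<delta> * E"
    using \<delta> by (intro mult_left_mono) (auto simp: hopf_barrier_def E_def)
  ultimately have below: "- u z < \<delta> * E" by simp
  have z_U: "z \<in> U" using ball_U e by auto
  have "\<delta> * E * (4 * \<alpha>\<^sup>2 * r\<^sup>2 - 4 * \<alpha>) \<le> - laplacian u z"
    unfolding E_def r_def
  proof (rule laplacian_at_local_min_minus_gaussian[OF e])
    show "- u z - \<delta> * exp (- \<alpha> * (cmod (z - c))\<^sup>2) \<le> - u y - \<delta> * exp (- \<alpha> * (cmod (y - c))\<^sup>2)"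
      if "y \<in> ball z e" for y
      using min[OF that] by (simp add: hopf_barrier_def algebra_simps)
  qed (use ball_U diff diff_pd1 diff_pd2 z_U in auto)
  also have "\<dots> \<le> lam * (- u z)"
    using laplacian_ge[OF z_U neg] by simp
  also have "\<dots> < lam * (\<delta> * E)"
    using mult_strict_left_mono[OF below lam_pos] by simp
  also have "\<dots> = \<delta> * E * lam" by simp
  finally have "4 * \<alpha>\<^sup>2 * r\<^sup>2 - 4 * \<alpha> < lam"
    using mult_less_cancel_left_pos[of "\<delta> * E"] \<delta> by (simp add: E_def)
  moreover have "\<alpha>\<^sup>2 * \<rho>\<^sup>2 \<le> 4 * \<alpha>\<^sup>2 * r\<^sup>2"
  proof -
    have "\<rho>\<^sup>2 \<le> 4 * r\<^sup>2" using power_mono[OF r, of 2] \<rho> by (simp add: power_divide r_def)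
    from mult_left_mono[OF this, of "\<alpha>\<^sup>2"] show ?thesis by (simp add: mult.assoc mult.left_commute)
  qed
  moreover have "lam \<le> \<alpha> * (\<alpha> * \<rho>\<^sup>2 - 4)"
    using \<alpha> lam_pos mult_mono[of 1 \<alpha> lam "\<alpha> * \<rho>\<^sup>2 - 4"] by simp
  moreover have "\<alpha> * (\<alpha> * \<rho>\<^sup>2 - 4) = \<alpha>\<^sup>2 * \<rho>\<^sup>2 - 4 * \<alpha>"
    by (simp add: power2_eq_square algebra_simps)
  ultimately show False by linarith
qed

lemma hopf_barrier_below:
  assumes \<rho>: "\<rho> > 0" and ball_U: "cball c \<rho> \<subseteq> U"
    and neg: "\<And>z. z \<in> ball c \<rho> \<Longrightarrow> u z < 0"
    and \<delta>: "\<delta> > 0" and inner: "\<And>z. z \<in> sphere c (\<rho>/2) \<Longrightarrow> u z \<le> - \<delta>"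
    and \<alpha>: "\<alpha> \<ge> 1" "4 + lam \<le> \<alpha> * \<rho>\<^sup>2"
    and z: "z \<in> cball c \<rho> - ball c (\<rho>/2)"
  shows "\<delta> * hopf_barrier \<alpha> c \<rho> z \<le> - u z"
proof -
  define A where "A = cball c \<rho> - ball c (\<rho>/2)"
  define \<phi> where "\<phi> y = - u y - \<delta> * hopf_barrier \<alpha> c \<rho> y" for y
  have A_U: "A \<subseteq> U" using ball_U by (auto simp: A_def)
  have "continuous_on A \<phi>"
    unfolding \<phi>_def hopf_barrier_def by (intro continuous_intros continuous_on_subset[OF cont A_U])
  moreover have "compact A" "A \<noteq> {}" using z by (auto simp: A_def compact_diff)
  ultimately obtain zm where zm: "zm \<in> A" and min: "\<And>y. y \<in> A \<Longrightarrow> \<phi> zm \<le> \<phi> y"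
    using continuous_attains_inf[of A \<phi>] by blast
  have "\<phi> zm \<ge> 0"
  proof -
    define r where "r = cmod (zm - c)"
    have r: "\<rho>/2 \<le> r" "r \<le> \<rho>" using zm by (auto simp: A_def r_def dist_norm norm_minus_commute)
    consider "r = \<rho>" | "r = \<rho>/2" | "zm \<in> ball c \<rho> - cball c (\<rho>/2)"
      using r by (fastforce simp: r_def dist_norm norm_minus_commute)
    then show ?thesis
    proof cases
      case 1
      then show ?thesis using nonpos[of zm] zm A_U by (auto simp: \<phi>_def hopf_barrier_def r_def)
    next
      case 2
      have "exp (- \<alpha> * (cmod (zm - c))\<^sup>2) \<le> 1" using \<alpha> by simp
      then have "hopf_barrier \<alpha> c \<rho> zm \<le> 1"
        unfolding hopf_barrier_def using exp_gt_zero[of "- \<alpha> * \<rho>\<^sup>2"] by linarith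
      then have "\<delta> * hopf_barrier \<alpha> c \<rho> zm \<le> \<delta>"
        using \<delta> by (simp add: mult_left_le)
      moreover have "u zm \<le> - \<delta>" using inner 2 by (simp add: r_def dist_norm norm_minus_commute)
      ultimately show ?thesis by (simp add: \<phi>_def)
    next
      case 3
      obtain e where e: "e > 0" "ball zm e \<subseteq> ball c \<rho> - cball c (\<rho>/2)"
        using open_contains_ball_eq[of "ball c \<rho> - cball c (\<rho>/2)"] 3 by blast
      then have "ball zm e \<subseteq> A" by (auto simp: A_def)
      then show ?thesis
        using min neg[of zm] 3 r(1) A_U
        by (auto simp: \<phi>_def r_def intro!: hopf_barrier_below_at_local_min[OF e(1) _ _ \<rho> _ \<delta> \<alpha>])
    qed
  qed
  then show ?thesis using min[of z] z by (simp add: A_def \<phi>_def)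
qed

lemma hopf_lemma:
  assumes \<rho>: "\<rho> > 0" and ball_U: "cball c \<rho> \<subseteq> U"
    and neg: "\<And>z. z \<in> ball c \<rho> \<Longrightarrow> u z < 0"
    and x0: "dist c x0 = \<rho>" "u x0 = 0"
  shows "dir_deriv u ((c - x0) / of_real \<rho>) x0 < 0"
proof -
  have "sphere c (\<rho>/2) \<noteq> {}" using \<rho> by simp
  moreover have "continuous_on (sphere c (\<rho>/2)) u"
    by (rule continuous_on_subset[OF cont]) (use ball_U \<rho> in auto)
  ultimately obtain zs where zs: "zs \<in> sphere c (\<rho>/2)" and
    zs_max: "\<And>z. z \<in> sphere c (\<rho>/2) \<Longrightarrow> u z \<le> u zs"
    using continuous_attains_sup[OF compact_sphere] by blast
  define \<delta> where "\<delta> = - u zs"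
  have \<delta>: "\<delta> > 0" using neg[of zs] zs \<rho> by (simp add: \<delta>_def)
  define \<alpha> where "\<alpha> = (4 + lam) / \<rho>\<^sup>2 + 1"
  have \<alpha>: "\<alpha> \<ge> 1" "4 + lam \<le> \<alpha> * \<rho>\<^sup>2"
    using lam_pos \<rho> by (simp_all add: \<alpha>_def field_simps)
  define n where "n = (c - x0) / of_real \<rho>"
  have n: "cmod n = 1" using x0 \<rho> by (simp add: n_def norm_divide dist_norm)
  have on_normal: "cmod (x0 + complex_of_real t * n - c) = \<bar>t - \<rho>\<bar>" for t
  proof -
    have "x0 + complex_of_real t * n - c = of_real (t - \<rho>) * n" using \<rho> by (simp add: n_def field_simps)
    then show ?thesis using n by (simp add: norm_mult del: of_real_diff)
  qed
  define G where "G t = - u (x0 + complex_of_real t * n) - \<delta> * hopf_barrier \<alpha> c \<rho> (x0 + complex_of_real t * n)"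
    for t
  have G_eq: "G t = - u (x0 + complex_of_real t * n) - \<delta> * (exp (- \<alpha> * (t - \<rho>)\<^sup>2) - exp (- \<alpha> * \<rho>\<^sup>2))"
    for t
    unfolding G_def hopf_barrier_def on_normal by simp
  have x0_U: "x0 \<in> U" using ball_U x0 by auto
  have G': "(G has_real_derivative
      - dir_deriv u n x0 - \<delta> * (exp (- \<alpha> * \<rho>\<^sup>2) * (2 * \<alpha> * \<rho>))) (at 0)"
    unfolding G_eq[abs_def]
    using has_real_derivative_dir_deriv[of u x0 0 n] diff[OF x0_U]
    by (auto intro!: derivative_eq_intros simp: algebra_simps)
  have G_min: "G 0 \<le> G t" if "0 < t" "t < \<rho>/2" for t
  proof -
    have "dist c (x0 + complex_of_real t * n) = \<rho> - t"
      using on_normal[of t] that by (simp add: dist_norm norm_minus_commute)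
    then have "\<delta> * hopf_barrier \<alpha> c \<rho> (x0 + complex_of_real t * n) \<le> - u (x0 + complex_of_real t * n)"
      using that zs_max by (intro hopf_barrier_below[OF \<rho> ball_U neg \<delta> _ \<alpha>]) (auto simp: \<delta>_def)
    then show ?thesis using x0 on_normal[of 0] \<rho> by (simp add: G_def hopf_barrier_def)
  qed
  have "- dir_deriv u n x0 - \<delta> * (exp (- \<alpha> * \<rho>\<^sup>2) * (2 * \<alpha> * \<rho>)) \<ge> 0"
    by (rule DERIV_nonneg_at_right_local_min[where e="\<rho>/2", OF G' _ G_min]) (use \<rho> in auto)
  moreover have "\<delta> * (exp (- \<alpha> * \<rho>\<^sup>2) * (2 * \<alpha> * \<rho>)) > 0"
    using \<delta> \<alpha> \<rho> by simp
  ultimately have "dir_deriv u n x0 < 0" by linarith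
  then show ?thesis by (simp add: n_def)
qed

lemma hopf_sphere_nonzero:
  assumes \<rho>: "\<rho> > 0" and ball_U: "cball c \<rho> \<subseteq> U"
    and neg: "\<And>z. z \<in> ball c \<rho> \<Longrightarrow> u z < 0"
    and x0: "dist c x0 = \<rho>"
  shows "u x0 \<noteq> 0"
proof
  assume "u x0 = 0"
  then have "dir_deriv u ((c - x0) / of_real \<rho>) x0 < 0"
    using hopf_lemma \<rho> ball_U neg x0 by blast
  moreover have "x0 \<in> U" using ball_U x0 by auto
  then obtain r where "r > 0" "ball x0 r \<subseteq> U"
    using open_U open_contains_ball by blast
  then have "dir_deriv u ((c - x0) / of_real \<rho>) x0 = 0"
    using \<rho> x0 diff nonpos \<open>u x0 = 0\<close>
    by (intro dir_deriv_local_max[of r]) (auto simp: dist_norm norm_mult norm_divide norm_minus_commute subset_iff)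
  ultimately show False by simp
qed

lemma open_zero_set: "open {z \<in> U. u z = 0}"
  unfolding open_contains_ball
proof (intro ballI)
  fix z0 assume "z0 \<in> {z \<in> U. u z = 0}"
  then have z0: "z0 \<in> U" "u z0 = 0" by auto
  obtain R where R: "R > 0" "cball z0 R \<subseteq> U" using open_U z0 open_contains_cball by blast
  have "\<forall>z\<in>ball z0 (R/2). u z = 0"
  proof (rule ccontr)
    assume "\<not> (\<forall>z\<in>ball z0 (R/2). u z = 0)"
    then obtain z1 where z1: "z1 \<in> ball z0 (R/2)" "u z1 \<noteq> 0" by blast
    \<comment> \<open>The largest ball around z1 on which u < 0 touches the zero set at a point x0.\<close>
    define Z where "Z = {z \<in> cball z0 R. u z = 0}"
    have "closed Z" unfolding Z_def
      by (rule continuous_closed_preimage_constant[OF continuous_on_subset[OF cont R(2)] closed_cball])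
    moreover have "z0 \<in> Z" using z0 R by (simp add: Z_def)
    ultimately obtain x0 where x0: "x0 \<in> Z" and nearest: "\<And>z. z \<in> Z \<Longrightarrow> dist z1 x0 \<le> dist z1 z"
      using distance_attains_inf[of Z z1] by blast
    define \<rho> where "\<rho> = dist z1 x0"
    have \<rho>: "\<rho> > 0" using z1 x0 by (auto simp: \<rho>_def Z_def)
    have "\<rho> < R/2" using nearest[OF \<open>z0 \<in> Z\<close>] z1(1) by (simp add: \<rho>_def dist_commute)
    have ball_R: "cball z1 \<rho> \<subseteq> cball z0 R"
    proof
      fix z assume "z \<in> cball z1 \<rho>"
      then show "z \<in> cball z0 R"
        using dist_triangle[of z0 z z1] \<open>\<rho> < R/2\<close> z1(1) by (simp add: dist_commute)
    qed
    have neg: "u z < 0" if "z \<in> ball z1 \<rho>" for z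
    proof -
      have z_R: "z \<in> cball z0 R" using that ball_R ball_subset_cball by blast
      have "z \<notin> Z" using nearest[of z] that by (auto simp: \<rho>_def)
      then have "u z \<noteq> 0" using z_R by (auto simp: Z_def)
      then show ?thesis using nonpos[of z] z_R R(2) by force
    qed
    have "u x0 = 0" using x0 by (simp add: Z_def)
    with hopf_sphere_nonzero[OF \<rho> _ neg] ball_R R(2) show False by (auto simp: \<rho>_def)
  qed
  then show "\<exists>e>0. ball z0 e \<subseteq> {z \<in> U. u z = 0}"
    using R by (intro exI[of _ "R/2"]) auto
qed

lemma strong_maximum_principle:
  assumes "connected U" "z \<in> U" "u z < 0" "y \<in> U"
  shows "u y < 0"
proof -
  have "openin (top_of_set U) {x \<in> U. u x = 0}"
    using open_zero_set by (simp add: open_subset)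
  moreover have "closedin (top_of_set U) {x \<in> U. u x = 0}"
    by (rule continuous_closedin_preimage_constant[OF cont])
  ultimately have "{x \<in> U. u x = 0} = {} \<or> {x \<in> U. u x = 0} = U"
    using assms(1) connected_clopen by blast
  then show ?thesis using assms nonpos[of y] by force
qed

end

section \<open>The period lattice\<close>

definition lattice_coord2 :: "complex \<Rightarrow> complex \<Rightarrow> complex \<Rightarrow> real" where
  "lattice_coord2 w1 w2 z = Im (z / w1) / Im (w2 / w1)"

definition lattice_coord1 :: "complex \<Rightarrow> complex \<Rightarrow> complex \<Rightarrow> real" where
  "lattice_coord1 w1 w2 z = Re (z / w1) - lattice_coord2 w1 w2 z * Re (w2 / w1)"

lemma lattice_coord_decomp:
  assumes "w1 \<noteq> 0" "Im (w2 / w1) \<noteq> 0"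
  shows "z = of_real (lattice_coord1 w1 w2 z) * w1 + of_real (lattice_coord2 w1 w2 z) * w2"
proof -
  define t where "t = w2 / w1"
  define \<zeta> where "\<zeta> = z / w1"
  have "Im t \<noteq> 0" using assms by (simp add: t_def)
  then have "of_real (Re \<zeta> - Im \<zeta> / Im t * Re t) + of_real (Im \<zeta> / Im t) * t = \<zeta>"
    by (intro complex_eqI) simp_all
  then have "z = of_real (Re \<zeta> - Im \<zeta> / Im t * Re t) * w1 + of_real (Im \<zeta> / Im t) * (t * w1)"
    using assms by (simp add: \<zeta>_def field_simps)
  then show ?thesis using assms by (simp add: lattice_coord1_def lattice_coord2_def t_def \<zeta>_def)
qed

lemma lattice_coord_of_real:
  assumes "w1 \<noteq> 0" "Im (w2 / w1) \<noteq> 0"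
  shows "lattice_coord2 w1 w2 (of_real a * w1 + of_real b * w2) = b"
    and "lattice_coord1 w1 w2 (of_real a * w1 + of_real b * w2) = a"
proof -
  define t where "t = w2 / w1"
  have "Im t \<noteq> 0" using assms by (simp add: t_def)
  have quot: "(of_real a * w1 + of_real b * w2) / w1 = of_real a + of_real b * t"
    using assms by (simp add: t_def field_simps)
  show "lattice_coord2 w1 w2 (of_real a * w1 + of_real b * w2) = b"
    using \<open>Im t \<noteq> 0\<close> by (simp add: lattice_coord2_def quot flip: t_def)
  then show "lattice_coord1 w1 w2 (of_real a * w1 + of_real b * w2) = a"
    by (simp add: lattice_coord1_def quot flip: t_def)
qed

lemma lattice_eq_coords_Ints:
  assumes "w1 \<noteq> 0" "Im (w2 / w1) \<noteq> 0"
  shows "lattice w1 w2 = lattice_coord1 w1 w2 -` \<int> \<inter> lattice_coord2 w1 w2 -` \<int>"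
proof (intro equalityI subsetI)
  fix z assume "z \<in> lattice w1 w2"
  then obtain m n :: int where "z = of_int m * w1 + of_int n * w2"
    unfolding lattice_def by auto
  then have "z = of_real (of_int m) * w1 + of_real (of_int n) * w2" by simp
  then show "z \<in> lattice_coord1 w1 w2 -` \<int> \<inter> lattice_coord2 w1 w2 -` \<int>"
    using lattice_coord_of_real[OF assms, of "of_int m" "of_int n"] by simp
next
  fix z assume "z \<in> lattice_coord1 w1 w2 -` \<int> \<inter> lattice_coord2 w1 w2 -` \<int>"
  then obtain m n where "lattice_coord1 w1 w2 z = of_int m" "lattice_coord2 w1 w2 z = of_int n"
    by (auto elim!: Ints_cases)
  then have "z = of_int m * w1 + of_int n * w2"
    using lattice_coord_decomp[OF assms, of z] by simp
  then show "z \<in> lattice w1 w2" unfolding lattice_def by blast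
qed

lemma closed_lattice:
  assumes "w1 \<noteq> 0" "Im (w2 / w1) \<noteq> 0"
  shows "closed (lattice w1 w2)"
proof -
  have "continuous_on UNIV (lattice_coord2 w1 w2)" "continuous_on UNIV (lattice_coord1 w1 w2)"
    unfolding lattice_coord1_def lattice_coord2_def by (intro continuous_intros; use assms in simp)+
  then show ?thesis unfolding lattice_eq_coords_Ints[OF assms]
    by (intro closed_Int continuous_closed_vimage closed_Ints) (auto simp: continuous_on_eq_continuous_at)
qed

lemma countable_lattice: "countable (lattice w1 w2)"
proof -
  have "lattice w1 w2 = (\<lambda>(m::int, n::int). of_int m * w1 + of_int n * w2) ` UNIV"
    unfolding lattice_def by auto
  then show ?thesis by simp
qed

lemma zero_in_lattice: "0 \<in> lattice w1 w2"
  unfolding lattice_def by (auto intro!: exI[of _ 0])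

lemma add_in_lattice: "a \<in> lattice w1 w2 \<Longrightarrow> b \<in> lattice w1 w2 \<Longrightarrow> a + b \<in> lattice w1 w2"
  unfolding lattice_def by clarify (rule exI[of _ "_ + _"], rule exI[of _ "_ + _"], simp add: algebra_simps)

lemma uminus_in_lattice: "a \<in> lattice w1 w2 \<Longrightarrow> - a \<in> lattice w1 w2"
  unfolding lattice_def by clarify (rule exI[of _ "- _"], rule exI[of _ "- _"], simp add: algebra_simps)

lemma sing_set_eq_UN: "sing_set w1 w2 N p = (\<Union>s\<in>{1..N}. (+) (p s) ` lattice w1 w2)"
  unfolding sing_set_def by fastforce

lemma closed_sing_set:
  assumes "w1 \<noteq> 0" "Im (w2 / w1) \<noteq> 0"
  shows "closed (sing_set w1 w2 N p)"
  unfolding sing_set_eq_UN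
  by (intro closed_UN finite_atLeastAtMost ballI closed_translation closed_lattice assms)

lemma countable_sing_set: "countable (sing_set w1 w2 N p)"
  unfolding sing_set_eq_UN using countable_lattice by auto

lemma add_lattice_in_sing_set:
  assumes "z \<in> sing_set w1 w2 N p" "l \<in> lattice w1 w2"
  shows "z + l \<in> sing_set w1 w2 N p"
proof -
  obtain s w where "s \<in> {1..N}" "w \<in> lattice w1 w2" "z = p s + w"
    using assms(1) unfolding sing_set_def by blast
  then show ?thesis unfolding sing_set_def
    using add_in_lattice[OF _ assms(2)] by (auto intro!: exI[of _ s] exI[of _ "w + l"])
qed

lemma add_lattice_in_sing_set_iff:
  assumes "l \<in> lattice w1 w2"
  shows "z + l \<in> sing_set w1 w2 N p \<longleftrightarrow> z \<in> sing_set w1 w2 N p"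
  using add_lattice_in_sing_set[OF _ assms] add_lattice_in_sing_set[of "z + l" w1 w2 N p "- l"]
    uminus_in_lattice[OF assms] by force

lemma periodic_int_multiple:
  assumes "\<And>z. u (z + w) = u z"
  shows "u (z + of_int k * w) = u z"
proof (induction k arbitrary: z rule: int_induct[where k=0])
  case (step1 i)
  have "u (z + of_int (i + 1) * w) = u ((z + of_int i * w) + w)" by (simp add: algebra_simps)
  with assms step1 show ?case by simp
next
  case (step2 i)
  have "u z = u ((z + of_int (i - 1) * w) + w)" using step2 by (simp add: algebra_simps)
  with assms show ?case by simp
qed simp

lemma periodic_lattice:
  assumes "\<And>z. u (z + w1) = u z" "\<And>z. u (z + w2) = u z" "l \<in> lattice w1 w2"
  shows "u (z + l) = u z"
proof -
  obtain m n :: int where l: "l = of_int m * w1 + of_int n * w2"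
    using assms(3) unfolding lattice_def by blast
  have "u (z + l) = u ((z + of_int m * w1) + of_int n * w2)" by (simp add: l add.assoc)
  also have "\<dots> = u z" using periodic_int_multiple[of u] assms(1,2) by simp
  finally show ?thesis .
qed

definition fundamental_cell :: "complex \<Rightarrow> complex \<Rightarrow> complex set" where
  "fundamental_cell w1 w2 = (\<lambda>(a, b). of_real a * w1 + of_real b * w2) ` ({0..1} \<times> {0..1})"

lemma compact_fundamental_cell: "compact (fundamental_cell w1 w2)"
  unfolding fundamental_cell_def
  by (intro compact_continuous_image compact_Times compact_Icc)
     (auto intro!: continuous_intros simp: case_prod_unfold)

lemma fundamental_cell_translate:
  assumes "w1 \<noteq> 0" "Im (w2 / w1) \<noteq> 0"
  obtains z' l where "z' \<in> fundamental_cell w1 w2" "l \<in> lattice w1 w2" "z = z' + l"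
proof -
  define a b where "a = lattice_coord1 w1 w2 z" and "b = lattice_coord2 w1 w2 z"
  have "of_real (frac a) * w1 + of_real (frac b) * w2 \<in> fundamental_cell w1 w2"
    unfolding fundamental_cell_def
    by (rule image_eqI[of _ _ "(frac a, frac b)"]) (auto simp: less_imp_le[OF frac_lt_1])
  moreover have "of_int \<lfloor>a\<rfloor> * w1 + of_int \<lfloor>b\<rfloor> * w2 \<in> lattice w1 w2"
    unfolding lattice_def by blast
  moreover have "z = (of_real (frac a) * w1 + of_real (frac b) * w2) + (of_int \<lfloor>a\<rfloor> * w1 + of_int \<lfloor>b\<rfloor> * w2)"
    using lattice_coord_decomp[OF assms, of z] by (simp add: a_def b_def frac_def algebra_simps)
  ultimately show ?thesis using that by blast
qed

lemma closed_superlevel_set: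
  fixes u :: "'a::metric_space \<Rightarrow> real"
  assumes cont: "continuous_on U u"
    and outside: "\<And>q. q \<notin> U \<Longrightarrow> \<forall>\<^sub>F x in at q. u x < c"
  shows "closed {x \<in> U. c \<le> u x}"
  unfolding closed_limpt
proof (intro allI impI)
  fix x assume lim: "x islimpt {x \<in> U. c \<le> u x}"
  have "x \<in> U"
  proof (rule ccontr)
    assume "x \<notin> U"
    have "\<forall>\<^sub>F y in at x. y \<notin> {x \<in> U. c \<le> u x}"
      using outside[OF \<open>x \<notin> U\<close>] by (rule eventually_mono) auto
    with lim show False by (simp add: islimpt_iff_eventually)
  qed
  moreover have "closedin (top_of_set U) {x \<in> U. c \<le> u x}"
    using continuous_closedin_preimage[OF cont closed_atLeast, of c] by (simp add: vimage_def Int_def)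
  ultimately show "x \<in> {x \<in> U. c \<le> u x}"
    using lim by (auto simp: closedin_limpt)
qed

lemma periodic_attains_max:
  fixes u :: "complex \<Rightarrow> real"
  assumes w: "w1 \<noteq> 0" "Im (w2 / w1) \<noteq> 0"
    and U_per: "\<And>x l. l \<in> lattice w1 w2 \<Longrightarrow> x + l \<in> U \<longleftrightarrow> x \<in> U"
    and u_per: "\<And>x l. l \<in> lattice w1 w2 \<Longrightarrow> u (x + l) = u x"
    and cont: "continuous_on U u"
    and outside: "\<And>q c. q \<notin> U \<Longrightarrow> \<forall>\<^sub>F x in at q. u x < c"
    and z: "z \<in> U"
  obtains zm where "zm \<in> U" "\<And>y. y \<in> U \<Longrightarrow> u y \<le> u zm"
proof -
  define K where "K = fundamental_cell w1 w2 \<inter> {x \<in> U. u z \<le> u x}"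
  have "compact K"
    unfolding K_def by (intro compact_Int_closed compact_fundamental_cell closed_superlevel_set cont outside)
  moreover obtain z' l where "z' \<in> fundamental_cell w1 w2" "l \<in> lattice w1 w2" "z = z' + l"
    using fundamental_cell_translate[OF w] .
  then have "z' \<in> K" using z U_per u_per by (auto simp: K_def)
  moreover have "continuous_on K u" using cont by (rule continuous_on_subset) (auto simp: K_def)
  ultimately obtain zm where zm: "zm \<in> K" "\<And>y. y \<in> K \<Longrightarrow> u y \<le> u zm"
    using continuous_attains_sup[of K u] by blast
  have "u y \<le> u zm" if "y \<in> U" for y
  proof -
    obtain y' l where y': "y' \<in> fundamental_cell w1 w2" "l \<in> lattice w1 w2" "y = y' + l"
      using fundamental_cell_translate[OF w] .
    then have "y' \<in> U" "u y = u y'" using that U_per u_per by auto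
    then show ?thesis using zm y'(1) by (cases "u z \<le> u y'") (auto simp: K_def)
  qed
  with zm(1) show ?thesis using that by (auto simp: K_def)
qed

section \<open>Solutions of the vortex equation\<close>

lemma smooth_on_iter_pd_differentiable:
  assumes "open S" "smooth_on S f" "z \<in> S"
  shows "iter_pd ws f differentiable (at z)"
  using assms differentiable_on_eq_differentiable_at unfolding smooth_on_def by blast

lemma smooth_on_continuous_on: "smooth_on S f \<Longrightarrow> continuous_on S f"
  unfolding smooth_on_def by (metis iter_pd.simps(1))

lemma mult_pos_of_mem_sing_set:
  assumes "q \<in> sing_set w1 w2 N p"
  shows "0 < mult w1 w2 N p q"
proof -
  obtain s w where "s \<in> {1..N}" "w \<in> lattice w1 w2" "q = p s + w"
    using assms unfolding sing_set_def by blast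
  then have "s \<in> {s \<in> {1..N}. q - p s \<in> lattice w1 w2}" by simp
  then show ?thesis unfolding mult_def by (auto simp: card_gt_0_iff)
qed

lemma solution_tendsto_at_bot:
  assumes sol: "is_solution w1 w2 lam N p u" and q: "q \<in> sing_set w1 w2 N p"
  shows "filterlim u at_bot (at q)"
proof -
  define m where "m = real (mult w1 w2 N p q)"
  obtain r f where r: "r > 0" and f: "smooth_on (ball q r) f"
    and u_eq: "\<And>x. x \<in> ball q r - {q} \<Longrightarrow> u x = m * ln ((cmod (x - q))\<^sup>2) + f x"
    using sol q unfolding is_solution_def m_def by blast
  have "(f \<longlongrightarrow> f q) (at q)"
    using smooth_on_continuous_on[OF f] r by (simp add: continuous_on_eq_continuous_at isContD)
  moreover have "filterlim (\<lambda>x. (cmod (x - q))\<^sup>2) (at_right 0) (at q)"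
    by (rule tendsto_imp_filterlim_at_right)
       (auto intro!: tendsto_eq_intros simp: eventually_at_filter)
  then have "filterlim (\<lambda>x. m * ln ((cmod (x - q))\<^sup>2)) at_bot (at q)"
    using mult_pos_of_mem_sing_set[OF q] unfolding m_def
    by (intro filterlim_tendsto_pos_mult_at_bot[OF tendsto_const] filterlim_compose[OF ln_at_0]) auto
  ultimately have lim: "filterlim (\<lambda>x. f x + m * ln ((cmod (x - q))\<^sup>2)) at_bot (at q)"
    by (simp add: filterlim_tendsto_add_at_bot_iff)
  have ev: "\<forall>\<^sub>F x in at q. f x + m * ln ((cmod (x - q))\<^sup>2) = u x"
    unfolding eventually_at using r u_eq by (auto simp: dist_commute intro!: exI[of _ r])
  show ?thesis using filterlim_cong[OF refl refl ev] lim by simp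
qed

lemma solution_regularity:
  assumes w: "w1 \<noteq> 0" "Im (w2 / w1) \<noteq> 0" and sol: "is_solution w1 w2 lam N p u"
  shows "open (- sing_set w1 w2 N p)" "continuous_on (- sing_set w1 w2 N p) u"
    and "\<And>z. z \<notin> sing_set w1 w2 N p \<Longrightarrow> u differentiable (at z)"
    and "\<And>z. z \<notin> sing_set w1 w2 N p \<Longrightarrow> pd1 u differentiable (at z)"
    and "\<And>z. z \<notin> sing_set w1 w2 N p \<Longrightarrow> pd2 u differentiable (at z)"
proof -
  show U: "open (- sing_set w1 w2 N p)" using closed_sing_set[OF w] by (simp add: open_Compl)
  have smooth: "smooth_on (- sing_set w1 w2 N p) u" using sol by (simp add: is_solution_def)
  then show "continuous_on (- sing_set w1 w2 N p) u" by (rule smooth_on_continuous_on)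
  fix z assume "z \<notin> sing_set w1 w2 N p"
  then have z: "z \<in> - sing_set w1 w2 N p" by simp
  show "u differentiable (at z)" "pd1 u differentiable (at z)" "pd2 u differentiable (at z)"
    using smooth_on_iter_pd_differentiable[OF U smooth z, of "[]"]
      smooth_on_iter_pd_differentiable[OF U smooth z, of "[True]"]
      smooth_on_iter_pd_differentiable[OF U smooth z, of "[False]"] by simp_all
qed

lemma solution_nonpos:
  assumes w: "w1 \<noteq> 0" "Im (w2 / w1) \<noteq> 0" and lam: "lam > 0"
    and sol: "is_solution w1 w2 lam N p u" and z: "z \<notin> sing_set w1 w2 N p"
  shows "u z \<le> 0"
proof -
  define U where "U = - sing_set w1 w2 N p"
  note regular = solution_regularity[OF w sol, folded U_def]
  have U_per: "x + l \<in> U \<longleftrightarrow> x \<in> U" if "l \<in> lattice w1 w2" for x l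
    using add_lattice_in_sing_set_iff[OF that] by (simp add: U_def)
  have "u (z + w1) = u z" "u (z + w2) = u z" for z
    using sol unfolding is_solution_def by blast+
  then have u_per: "u (x + l) = u x" if "l \<in> lattice w1 w2" for x l
    using periodic_lattice that by blast
  have outside: "\<forall>\<^sub>F x in at q. u x < c" if "q \<notin> U" for q c
    using solution_tendsto_at_bot[OF sol, of q] that by (simp add: U_def filterlim_at_bot_dense)
  obtain zm where zm: "zm \<in> U" and max: "\<And>y. y \<in> U \<Longrightarrow> u y \<le> u zm"
    using periodic_attains_max[OF w U_per u_per regular(2) outside, of z] z
    by (auto simp: U_def)
  obtain r where r: "r > 0" "ball zm r \<subseteq> U" using regular(1) zm open_contains_ball by blast
  have "u differentiable (at y)" if "y \<in> ball zm r" for y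
    using regular(3)[of y] that r(2) by (auto simp: U_def)
  moreover have "pd1 u differentiable (at zm)" "pd2 u differentiable (at zm)"
    using regular(4,5) zm by (auto simp: U_def)
  moreover have "u y \<le> u zm" if "y \<in> ball zm r" for y
    using max that r(2) by auto
  ultimately have grad: "grad_sq u zm = 0" and lap: "laplacian u zm \<le> 0"
    using local_max_grad_laplacian[OF r(1)] by blast+
  have eq: "(1 - exp (u zm)) * laplacian u zm - exp (u zm) * grad_sq u zm
      = - lam * exp (u zm) * (exp (u zm) - 1)\<^sup>2"
    using sol zm by (simp add: is_solution_def U_def)
  have "u zm \<le> 0"
  proof (rule ccontr)
    assume "\<not> u zm \<le> 0"
    then have E: "exp (u zm) > 1" by simp
    then have "(1 - exp (u zm)) * laplacian u zm \<ge> 0" using lap by (simp add: mult_nonpos_nonpos)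
    moreover have "- lam * exp (u zm) * (exp (u zm) - 1)\<^sup>2 < 0" using lam E by simp
    ultimately show False using eq grad by simp
  qed
  with max z show ?thesis by (fastforce simp: U_def)
qed

lemma vortex_eq_imp_laplacian_ge:
  fixes v L G lam :: real
  assumes v: "v < 0" and G: "G \<ge> 0" and lam: "lam \<ge> 0"
    and eq: "(1 - exp v) * L - exp v * G = - lam * exp v * (exp v - 1)\<^sup>2"
  shows "lam * v \<le> L"
proof -
  define E where "E = exp v"
  have E: "0 < E" "E < 1" using v by (simp_all add: E_def)
  have "(1 - E) * L = E * G - lam * E * (1 - E)\<^sup>2"
    using eq by (simp add: E_def power2_commute algebra_simps)
  also have "\<dots> \<ge> (1 - E) * (- lam * E * (1 - E))"
    using E G by (simp add: power2_eq_square algebra_simps)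
  finally have "(1 - E) * (- lam * E * (1 - E)) \<le> (1 - E) * L" .
  then have "- lam * E * (1 - E) \<le> L"
    using E by (metis diff_gt_0_iff_gt mult_le_cancel_left_pos)
  moreover have "E * (1 - E) \<le> - v"
  proof -
    have "E * (1 - E) \<le> 1 - E" using E by (simp add: mult_left_le_one_le)
    moreover have "1 + v \<le> E" unfolding E_def by (rule exp_ge_add_one_self)
    ultimately show ?thesis by simp
  qed
  then have "lam * v \<le> - lam * E * (1 - E)"
    using mult_left_mono[of "E * (1 - E)" "- v" lam] lam by simp
  ultimately show ?thesis by simp
qed

lemma solution_nonpos_subsolution:
  assumes w: "w1 \<noteq> 0" "Im (w2 / w1) \<noteq> 0" and lam: "lam > 0"
    and sol: "is_solution w1 w2 lam N p u"
  shows "nonpos_subsolution (- sing_set w1 w2 N p) u lam"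
proof
  note regular = solution_regularity[OF w sol]
  show "open (- sing_set w1 w2 N p)" "continuous_on (- sing_set w1 w2 N p) u" by (fact regular)+
  fix z assume z: "z \<in> - sing_set w1 w2 N p"
  show "u differentiable (at z)" "pd1 u differentiable (at z)" "pd2 u differentiable (at z)"
    using regular(3-5) z by simp_all
  show "u z \<le> 0" using solution_nonpos[OF w lam sol] z by simp
  show "lam * u z \<le> laplacian u z" if "u z < 0"
  proof (rule vortex_eq_imp_laplacian_ge[OF that])
    show "(1 - exp (u z)) * laplacian u z - exp (u z) * grad_sq u z = - lam * exp (u z) * (exp (u z) - 1)\<^sup>2"
      using sol z unfolding is_solution_def by blast
  qed (use lam in \<open>simp_all add: grad_sq_def\<close>)
qed (rule lam)

lemma solution_negative_somewhere:
  assumes sol: "is_solution w1 w2 lam N p u" and N: "N \<ge> 1"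
  obtains y where "y \<notin> sing_set w1 w2 N p" "u y < 0"
proof -
  have "p 1 \<in> sing_set w1 w2 N p"
    using N zero_in_lattice unfolding sing_set_def by force
  then have "\<forall>\<^sub>F x in at (p 1). u x < 0"
    using solution_tendsto_at_bot[OF sol] by (simp add: filterlim_at_bot_dense)
  then obtain \<delta> where \<delta>: "\<delta> > 0" "\<And>x. x \<noteq> p 1 \<Longrightarrow> dist x (p 1) < \<delta> \<Longrightarrow> u x < 0"
    unfolding eventually_at by blast
  have "uncountable (ball (p 1) \<delta> - insert (p 1) (sing_set w1 w2 N p))"
    by (intro uncountable_minus_countable uncountable_ball \<delta>(1) countable_insert countable_sing_set)
  then obtain y where "y \<in> ball (p 1) \<delta>" "y \<noteq> p 1" "y \<notin> sing_set w1 w2 N p"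
    by (metis Diff_iff countable_empty ex_in_conv insertCI)
  with \<delta>(2)[of y] that show ?thesis by (simp add: dist_commute)
qed

theorem lemma3p2:
  fixes w1 w2 :: complex and lam :: real and N :: nat
    and p :: "nat \<Rightarrow> complex" and u :: "complex \<Rightarrow> real"
  assumes "w1 \<noteq> 0" and "Im (w2 / w1) \<noteq> 0"
    and "N \<ge> 1"
    and "lam > 0"
    and "is_solution w1 w2 lam N p u"
  shows "\<forall>z. z \<notin> sing_set w1 w2 N p \<longrightarrow> u z < 0"
proof -
  interpret nonpos_subsolution "- sing_set w1 w2 N p" u lam
    using solution_nonpos_subsolution assms(1,2,4,5) .
  have "connected (- sing_set w1 w2 N p)"
    by (intro path_connected_imp_connected path_connected_complement_countable countable_sing_set) simp
  moreover obtain y where "y \<notin> sing_set w1 w2 N p" "u y < 0"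
    using solution_negative_somewhere assms(3,5) by blast
  ultimately show ?thesis using strong_maximum_principle by auto
qed

end
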